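(* Let $\Lambda\subset\mathbb Z^{2n+1}$ be a subgroup of rank at most $n-1$ with basis matrix $M(\Lambda)=(A\,|\,B\,|\,c)$, and let $V(\Lambda)$ be the associated variety of gluing equation type. Suppose $d=(d_1,\ldots,d_n)$ is a degeneration vector that is totally positive, i.e. $d_i>0$ for all $i$. If $A$ has rank $n-1$, then $d$ is genuine.
   Context: Let $\mathbb C^{*\bullet}=\mathbb C\setminus\{0,1\}$. For a subgroup $\Lambda\subset\mathbb Z^{2n+1}$, $V(\Lambda)\subset(\mathbb C^{*\bullet})^n$ is the set of points $(z_1,\ldots,z_n)$ with $z_1^{a_1}\cdots z_n^{a_n}(1-z_1)^{b_1}\cdots(1-z_n)^{b_n}=(-1)^c$ for all $(a_1,\ldots,a_n,b_1,\ldots,b_n,c)\in\Lambda$; when $\mathrm{rank}\,\Lambda\le n-1$ it is called a variety of gluing equation type. $M(\Lambda)$ is a matrix whose rows form a $\mathbb Z$-basis of $\Lambda$, written as $(A|B|c)$ with $A,B$ of size $r\times n$ and $c$ a column. Let $\overline V$ be the closure of $V(\Lambda)$ in $(\mathbb C\setminus\{1\})^n$; points of $\overline V\setminus V$ are ideal points. A degeneration vector is a nonzero $d\in\ker(A)\cap(\mathbb Z_{\ge0})^n$. It is genuine if there is an ideal point $p$ and a holomorphic map $f$ from the open unit disc, $f:(\mathbb D,0)\to(\overline V,p)$ with $f(\mathbb D\setminus\{0\})\subset V(\Lambda)$, whose coordinates have the form $z_i=t^{d_i}u_i(t)$ with $u_i$ holomorphic, $u_i(0)\ne0$, and $u_i(0)\neq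 1$ whenever $d_i=0$. *)

theory Defs
  imports "HOL-Analysis.Analysis" "Jordan_Normal_Form.DL_Rank"
begin

text \<open>Conventions. n is the number of variables; the basis matrix M(Lambda) = (A|B|c) has r rows
  and is given entrywise: A j i, B j i (row j < r, column i < n) and c j.
  An element of Z^(2n+1) is a triple (a, b, gamma) with a, b :: nat => int (only i < n matters).\<close>

definition lattice_of ::
  "nat \<Rightarrow> nat \<Rightarrow> (nat \<Rightarrow> nat \<Rightarrow> int) \<Rightarrow> (nat \<Rightarrow> nat \<Rightarrow> int) \<Rightarrow> (nat \<Rightarrow> int)
     \<Rightarrow> ((nat \<Rightarrow> int) \<times> (nat \<Rightarrow> int) \<times> int) set" where
  "lattice_of n r A B c =
     {(a, b, g) | a b g. \<exists>k :: nat \<Rightarrow> int.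
        (\<forall>i. a i = (if i < n then (\<Sum>j<r. k j * A j i) else 0)) \<and>
        (\<forall>i. b i = (if i < n then (\<Sum>j<r. k j * B j i) else 0)) \<and>
        g = (\<Sum>j<r. k j * c j)}"

definition rows_independent ::
  "nat \<Rightarrow> nat \<Rightarrow> (nat \<Rightarrow> nat \<Rightarrow> int) \<Rightarrow> (nat \<Rightarrow> nat \<Rightarrow> int) \<Rightarrow> (nat \<Rightarrow> int) \<Rightarrow> bool" where
  "rows_independent n r A B c \<longleftrightarrow>
     (\<forall>k :: nat \<Rightarrow> int.
        (\<forall>i<n. (\<Sum>j<r. k j * A j i) = 0) \<and> (\<forall>i<n. (\<Sum>j<r. k j * B j i) = 0) \<and>
        (\<Sum>j<r. k j * c j) = 0 \<longrightarrow> (\<forall>j<r. k j = 0))"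

definition int_mat_rank :: "nat \<Rightarrow> nat \<Rightarrow> (nat \<Rightarrow> nat \<Rightarrow> int) \<Rightarrow> nat" where
  "int_mat_rank r n A = vec_space.rank r (mat r n (\<lambda>(j, i). rat_of_int (A j i)))"

definition Cstarbullet_pts :: "nat \<Rightarrow> (nat \<Rightarrow> complex) set" where
  "Cstarbullet_pts n = {z. (\<forall>i<n. z i \<noteq> 0 \<and> z i \<noteq> 1) \<and> (\<forall>i\<ge>n. z i = 0)}"

definition Vvar :: "nat \<Rightarrow> ((nat \<Rightarrow> int) \<times> (nat \<Rightarrow> int) \<times> int) set \<Rightarrow> (nat \<Rightarrow> complex) set" where
  "Vvar n \<Lambda> = {z \<in> Cstarbullet_pts n.
      \<forall>(a, b, g) \<in> \<Lambda>. (\<Prod>i<n. z i powi a i * (1 - z i) powi b i) = (-1) powi g}"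

text \<open>Closure of V in (C \ {1})^n (product topology, expressed with the sup-distance).\<close>
definition Vclosure :: "nat \<Rightarrow> ((nat \<Rightarrow> int) \<times> (nat \<Rightarrow> int) \<times> int) set \<Rightarrow> (nat \<Rightarrow> complex) set" where
  "Vclosure n \<Lambda> = {p. (\<forall>i<n. p i \<noteq> 1) \<and> (\<forall>i\<ge>n. p i = 0) \<and>
      (\<forall>e>0. \<exists>z\<in>Vvar n \<Lambda>. \<forall>i<n. norm (z i - p i) < e)}"

definition ideal_point :: "nat \<Rightarrow> ((nat \<Rightarrow> int) \<times> (nat \<Rightarrow> int) \<times> int) set \<Rightarrow> (nat \<Rightarrow> complex) \<Rightarrow> bool" where
  "ideal_point n \<Lambda> p \<longleftrightarrow> p \<in> Vclosure n \<Lambda> - Vvar n \<Lambda>"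

definition degeneration_vector :: "nat \<Rightarrow> nat \<Rightarrow> (nat \<Rightarrow> nat \<Rightarrow> int) \<Rightarrow> (nat \<Rightarrow> int) \<Rightarrow> bool" where
  "degeneration_vector n r A d \<longleftrightarrow>
     (\<forall>i<n. d i \<ge> 0) \<and> (\<exists>i<n. d i \<noteq> 0) \<and> (\<forall>j<r. (\<Sum>i<n. A j i * d i) = 0)"

definition genuine :: "nat \<Rightarrow> ((nat \<Rightarrow> int) \<times> (nat \<Rightarrow> int) \<times> int) set \<Rightarrow> (nat \<Rightarrow> int) \<Rightarrow> bool" where
  "genuine n \<Lambda> d \<longleftrightarrow>
     (\<exists>p f u. ideal_point n \<Lambda> p \<and>
        (\<forall>i<n. f i holomorphic_on ball 0 1) \<and>
        (\<forall>i<n. f i 0 = p i) \<and>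
        (\<forall>t\<in>ball 0 1. (\<lambda>i. if i < n then f i t else 0) \<in> Vclosure n \<Lambda>) \<and>
        (\<forall>t\<in>ball 0 1 - {0}. (\<lambda>i. if i < n then f i t else 0) \<in> Vvar n \<Lambda>) \<and>
        (\<forall>i<n. u i holomorphic_on ball 0 1 \<and> u i 0 \<noteq> 0 \<and> (d i = 0 \<longrightarrow> u i 0 \<noteq> 1) \<and>
               (\<forall>t\<in>ball 0 1. f i t = t ^ nat (d i) * u i t)))"

end

theory Submission
  imports Defs "HOL-Complex_Analysis.Cauchy_Integral_Formula"
begin

(* The degeneration vector d is totally positive and A d = 0.  Look for a curve
   z_i(t) = t^(d_i) exp(x_i(t)) with x holomorphic near 0.  Taking logarithms, z lies on V(Lambda)
   as soon as  A x + B Ln(1 - z) = pi i c,  because A (d log t) = 0.  Since A has full row rank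
   (rank A = n - 1 >= r) it has a right inverse R, and that system follows from the fixed point
   equation  x = R (pi i c - B Ln(1 - z)).  For |t| small the right-hand side is a contraction
   in x, uniformly in t; its Picard iterates are holomorphic in t and converge uniformly, so the
   limit is a holomorphic fixed point (Weierstrass).  Rescaling t to the unit disc gives the
   holomorphic arc demanded by genuineness, with u_i(t) = rho^(d_i) exp(x_i(rho t)) nonvanishing. *)


section \<open>Full row rank integer matrices have a right inverse\<close>

lemma unit_vector_in_column_span:
  fixes A :: "nat \<Rightarrow> nat \<Rightarrow> int"
  assumes rk: "int_mat_rank r n A \<ge> r" and j: "j < r"
  shows "\<exists>y :: nat \<Rightarrow> rat. \<forall>j'<r. (\<Sum>i<n. rat_of_int (A j' i) * y i) = (if j' = j then 1 else 0)"
proof -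
  define M where "M = mat r n (\<lambda>(j, i). rat_of_int (A j i))"
  have Mc: "M \<in> carrier_mat r n" unfolding M_def by simp
  interpret V: vec_space "TYPE(rat)" r .
  let ?P = "\<lambda>T. T \<subseteq> set (cols M) \<and> V.lin_indpt T"
  obtain S where fS: "finite S" and mS: "maximal S ?P"
    using maximal_exists[of ?P "card (set (cols M))" "{}"]
    by (meson List.finite_set card_mono empty_subsetI rev_finite_subset V.finite_lin_indpt2 empty_iff)
  have SP: "?P S" using mS unfolding maximal_def by blast
  have Sc: "S \<subseteq> carrier_vec r" using SP Mc cols_dim by blast
  have "card S \<ge> V.dim"
    using rk V.rank_card_indpt[OF Mc mS] V.dim_is_n unfolding int_mat_rank_def M_def by simp
  hence "V.basis S" using V.dim_li_is_basis[OF V.fin_dim fS] Sc SP by auto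
  hence "unit_vec r j \<in> V.span S" using j unfolding V.basis_def by auto
  then obtain a where ua: "unit_vec r j = V.lincomb a S"
    using V.finite_span[OF fS] Sc by auto
  text \<open>Each column in S is the column of some index; collect the coefficients by index.\<close>
  define idx where "idx v = (SOME i. i < n \<and> col M i = v)" for v
  have idx: "idx v < n \<and> col M (idx v) = v" if "v \<in> S" for v
  proof -
    have "v \<in> set (cols M)" using that SP by blast
    then obtain i where "i < n" "col M i = v" using Mc by (auto simp: cols_def)
    thus ?thesis unfolding idx_def by (metis (mono_tags, lifting) someI)
  qed
  define y where "y i = (\<Sum>v\<in>S. if idx v = i then a v else 0)" for i
  show ?thesis
  proof (intro exI allI impI)
    fix j' assume j': "j' < r"
    have "(\<Sum>i<n. rat_of_int (A j' i) * y i)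
        = (\<Sum>i<n. \<Sum>v\<in>S. if idx v = i then a v * rat_of_int (A j' i) else 0)"
      unfolding y_def sum_distrib_left by (intro sum.cong refl) (auto simp: mult.commute)
    also have "\<dots> = (\<Sum>v\<in>S. \<Sum>i<n. if idx v = i then a v * rat_of_int (A j' i) else 0)"
      by (rule sum.swap)
    also have "\<dots> = (\<Sum>v\<in>S. a v * vec_index v j')"
    proof (intro sum.cong refl)
      fix v assume v: "v \<in> S"
      have "rat_of_int (A j' (idx v)) = vec_index (col M (idx v)) j'"
        using idx[OF v, THEN conjunct1] j' unfolding M_def by simp
      thus "(\<Sum>i<n. if idx v = i then a v * rat_of_int (A j' i) else 0) = a v * vec_index v j'"
        using idx[OF v] by simp
    qed
    also have "\<dots> = vec_index (V.lincomb a S) j'" using V.lincomb_index[OF j' Sc] by simp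
    also have "\<dots> = (if j' = j then 1 else 0)" using ua[symmetric] j j' by simp
    finally show "(\<Sum>i<n. rat_of_int (A j' i) * y i) = (if j' = j then 1 else 0)" .
  qed
qed

lemma full_row_rank_right_inverse:
  fixes A :: "nat \<Rightarrow> nat \<Rightarrow> int"
  assumes "int_mat_rank r n A \<ge> r"
  obtains R :: "nat \<Rightarrow> nat \<Rightarrow> complex" where
    "\<And>j j'. j < r \<Longrightarrow> j' < r \<Longrightarrow> (\<Sum>i<n. of_int (A j' i) * R i j) = (if j' = j then 1 else 0)"
proof -
  obtain Y where Y: "\<And>j j'. j < r \<Longrightarrow> j' < r \<Longrightarrow>
      (\<Sum>i<n. rat_of_int (A j' i) * Y j i) = (if j' = j then 1 else 0)"
    using unit_vector_in_column_span[OF assms] by metis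
  show ?thesis
  proof (rule that[of "\<lambda>i j. of_rat (Y j i)"])
    fix j j' assume "j < r" "j' < r"
    have "(\<Sum>i<n. of_int (A j' i) * (of_rat (Y j i) :: complex))
        = of_rat (\<Sum>i<n. rat_of_int (A j' i) * Y j i)"
      by (simp add: of_rat_sum of_rat_mult)
    thus "(\<Sum>i<n. of_int (A j' i) * (of_rat (Y j i) :: complex)) = (if j' = j then 1 else 0)"
      using Y[OF \<open>j < r\<close> \<open>j' < r\<close>] by simp
  qed
qed

lemma right_inverse_apply:
  fixes A :: "nat \<Rightarrow> nat \<Rightarrow> int" and R :: "nat \<Rightarrow> nat \<Rightarrow> complex"
  assumes AR: "\<And>j j'. j < r \<Longrightarrow> j' < r \<Longrightarrow> (\<Sum>i<n. of_int (A j' i) * R i j) = (if j' = j then 1 else 0)"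
    and j': "j' < r"
  shows "(\<Sum>i<n. of_int (A j' i) * (\<Sum>j<r. R i j * y j)) = y j'"
proof -
  have "(\<Sum>i<n. of_int (A j' i) * (\<Sum>j<r. R i j * y j)) = (\<Sum>j<r. y j * (\<Sum>i<n. of_int (A j' i) * R i j))"
    by (simp add: sum_distrib_left sum_distrib_right algebra_simps) (rule sum.swap)
  also have "\<dots> = (\<Sum>j<r. if j = j' then y j else 0)"
    using AR j' by (intro sum.cong refl) auto
  finally show ?thesis using j' by simp
qed


section \<open>Points of V(Lambda) from logarithmic data\<close>

lemma lattice_equations_from_logs:
  fixes z L Gm :: "nat \<Rightarrow> complex"
  assumes zL: "\<And>i. i < n \<Longrightarrow> z i = exp (L i)" and zG: "\<And>i. i < n \<Longrightarrow> 1 - z i = exp (Gm i)"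
    and eq: "\<And>j. j < r \<Longrightarrow>
      (\<Sum>i<n. of_int (A j i) * L i) + (\<Sum>i<n. of_int (B j i) * Gm i) = of_real pi * \<i> * of_int (c j)"
    and mem: "(a, b, g) \<in> lattice_of n r A B c"
  shows "(\<Prod>i<n. z i powi a i * (1 - z i) powi b i) = (-1) powi g"
proof -
  obtain k where ka: "\<forall>i. a i = (if i < n then (\<Sum>j<r. k j * A j i) else 0)"
    and kb: "\<forall>i. b i = (if i < n then (\<Sum>j<r. k j * B j i) else 0)" and kg: "g = (\<Sum>j<r. k j * c j)"
    using mem unfolding lattice_of_def by blast
  have "(\<Prod>i<n. z i powi a i * (1 - z i) powi b i) = (\<Prod>i<n. exp (of_int (a i) * L i + of_int (b i) * Gm i))"
    using zL zG by (intro prod.cong refl) (simp add: exp_power_int exp_add)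
  also have "\<dots> = exp (\<Sum>i<n. of_int (a i) * L i + of_int (b i) * Gm i)" by (rule exp_sum[symmetric]) simp
  also have "(\<Sum>i<n. of_int (a i) * L i + of_int (b i) * Gm i)
      = (\<Sum>i<n. \<Sum>j<r. of_int (k j) * (of_int (A j i) * L i + of_int (B j i) * Gm i))"
    using ka kb by (intro sum.cong refl)
      (simp add: sum_distrib_right sum_distrib_left sum.distrib algebra_simps)
  also have "\<dots> = (\<Sum>j<r. of_int (k j) * ((\<Sum>i<n. of_int (A j i) * L i) + (\<Sum>i<n. of_int (B j i) * Gm i)))"
    by (subst sum.swap) (simp add: sum_distrib_left sum.distrib distrib_left)
  also have "\<dots> = of_int g * (of_real pi * \<i>)"
    unfolding kg using eq by (simp add: sum_distrib_right sum_distrib_left algebra_simps)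
  finally show ?thesis by (simp add: exp_power_int[symmetric])
qed

text \<open>The form in which the lemma is used: z_i = s^(d_i) exp(x_i) with A d = 0, so the
  term d_i Ln s drops out of the A-part of the system.\<close>

lemma point_in_Vvar:
  fixes z x :: "nat \<Rightarrow> complex" and s :: complex and dn :: "nat \<Rightarrow> nat"
  assumes s: "s \<noteq> 0"
    and z: "\<And>i. i < n \<Longrightarrow> z i = s ^ dn i * exp (x i)" and z_out: "\<And>i. n \<le> i \<Longrightarrow> z i = 0"
    and z1: "\<And>i. i < n \<Longrightarrow> z i \<noteq> 1"
    and Ad: "\<And>j. j < r \<Longrightarrow> (\<Sum>i<n. A j i * int (dn i)) = 0"
    and eq: "\<And>j. j < r \<Longrightarrow>
      (\<Sum>i<n. of_int (A j i) * x i) + (\<Sum>i<n. of_int (B j i) * Ln (1 - z i)) = of_real pi * \<i> * of_int (c j)"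
  shows "z \<in> Vvar n (lattice_of n r A B c)"
proof -
  define L where "L i = of_nat (dn i) * Ln s + x i" for i
  have zL: "z i = exp (L i)" if "i < n" for i using z[OF that] s by (simp add: L_def exp_add exp_of_nat_mult)
  have zG: "1 - z i = exp (Ln (1 - z i))" if "i < n" for i using z1[OF that] by simp
  have eqL: "(\<Sum>i<n. of_int (A j i) * L i) + (\<Sum>i<n. of_int (B j i) * Ln (1 - z i))
      = of_real pi * \<i> * of_int (c j)" if j: "j < r" for j
  proof -
    have "(\<Sum>i<n. of_int (A j i) * (of_nat (dn i) :: complex)) = of_int (\<Sum>i<n. A j i * int (dn i))"
      by simp
    hence "(\<Sum>i<n. of_int (A j i) * (of_nat (dn i) :: complex)) = 0" using Ad[OF j] by simp
    moreover have "(\<Sum>i<n. of_int (A j i) * L i)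
        = Ln s * (\<Sum>i<n. of_int (A j i) * of_nat (dn i)) + (\<Sum>i<n. of_int (A j i) * x i)"
      unfolding L_def by (simp add: sum.distrib distrib_left sum_distrib_left algebra_simps)
    ultimately show ?thesis using eq[OF j] by simp
  qed
  have "z \<in> Cstarbullet_pts n"
    unfolding Cstarbullet_pts_def using z z_out z1 s by auto
  thus ?thesis
    unfolding Vvar_def using lattice_equations_from_logs[OF zL zG eqL] by auto
qed


lemma one_minus_not_nonpos: "cmod w \<le> 1/2 \<Longrightarrow> 1 - w \<notin> \<real>\<^sub>\<le>\<^sub>0"
  using abs_Re_le_cmod[of w] by (auto simp: complex_nonpos_Reals_iff)

lemma Ln_one_minus_lipschitz:
  assumes "cmod w \<le> 1/2" "cmod w' \<le> 1/2"
  shows "cmod (Ln (1 - w) - Ln (1 - w')) \<le> 2 * cmod (w - w')"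
proof (rule field_differentiable_bound[where S = "cball 0 (1/2)" and f = "\<lambda>w. Ln (1 - w)"
        and f' = "\<lambda>w. - inverse (1 - w)"])
  fix z assume "z \<in> cball (0::complex) (1/2)"
  hence z: "cmod z \<le> 1/2" by simp
  show "((\<lambda>w. Ln (1 - w)) has_field_derivative - inverse (1 - z)) (at z within cball 0 (1/2))"
    using one_minus_not_nonpos[OF z] by (auto intro!: derivative_eq_intros)
  have "cmod (1 - z) \<ge> 1/2" using norm_triangle_ineq2[of 1 z] z by simp
  hence "inverse (cmod (1 - z)) \<le> inverse (1/2)" by (intro le_imp_inverse_le) auto
  thus "cmod (- inverse (1 - z)) \<le> 2" by (simp add: norm_inverse)
qed (use assms in auto)

lemma Ln_one_minus_bound: "cmod w \<le> 1/2 \<Longrightarrow> cmod (Ln (1 - w)) \<le> 2 * cmod w"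
  using Ln_one_minus_lipschitz[of w 0] by simp

lemma exp_bound_near:
  assumes "dist c x \<le> 1"
  shows "cmod (exp x) \<le> exp (cmod c + 1)"
proof -
  have "cmod x \<le> cmod c + 1"
    using assms norm_triangle_ineq2[of x c] by (auto simp: dist_norm norm_minus_commute)
  hence "Re x \<le> cmod c + 1" using abs_Re_le_cmod[of x] by linarith
  thus ?thesis by (simp add: norm_exp_eq_Re)
qed

lemma exp_lipschitz_near:
  assumes "dist c x \<le> 1" "dist c y \<le> 1"
  shows "cmod (exp x - exp y) \<le> exp (cmod c + 1) * cmod (x - y)"
proof (rule field_differentiable_bound[where S = "cball c 1" and f = exp and f' = exp])
  fix z assume z: "z \<in> cball c 1"
  show "(exp has_field_derivative exp z) (at z within cball c 1)"
    by (auto intro!: derivative_eq_intros)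
  show "cmod (exp z) \<le> exp (cmod c + 1)"
    using z by (intro exp_bound_near) simp
qed (use assms in auto)

text \<open>Arithmetic behind the choice of radius rho = 1 / (8 K E (N + 1)) below.\<close>

lemma radius_arith:
  fixes K E N :: real assumes K: "K \<ge> 1" and E: "E \<ge> 1" and N: "N \<ge> 0"
  shows "1/(8*K*E*(N+1)) * E \<le> 1/8" "2 * K * (1/(8*K*E*(N+1))) * E * N \<le> 1/4"
        "2 * K * (1/(8*K*E*(N+1))) * E \<le> 1/4"
proof -
  have e1: "1/(8*K*E*(N+1)) * E = 1 / (8*K*(N+1))"
  proof -
    have "1/(8*K*E*(N+1)) * E = E / (E * (8*K*(N+1)))" by (simp add: ac_simps)
    also have "\<dots> = 1 / (8*K*(N+1))" using E by simp
    finally show ?thesis .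
  qed
  have e2: "2 * K * (1/(8*K*E*(N+1))) * E = 2/(8*(N+1))"
  proof -
    have "2 * K * (1/(8*K*E*(N+1))) * E = (K * E) * 2 / ((K * E) * (8*(N+1)))" by (simp add: ac_simps)
    also have "\<dots> = 2/(8*(N+1))" using E K by simp
    finally show ?thesis .
  qed
  have "8*K*(N+1) \<ge> 8" using K N by (smt (verit) mult_le_cancel_left1 mult_mono)
  thus "1/(8*K*E*(N+1)) * E \<le> 1/8" unfolding e1 by (simp add: divide_simps)
  show "2 * K * (1/(8*K*E*(N+1))) * E * N \<le> 1/4" unfolding e2 using N by (simp add: divide_simps)
  show "2 * K * (1/(8*K*E*(N+1))) * E \<le> 1/4" unfolding e2 using N by (simp add: divide_simps)
qed

definition dist1 :: "nat \<Rightarrow> (nat \<Rightarrow> complex) \<Rightarrow> (nat \<Rightarrow> complex) \<Rightarrow> real" where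
  "dist1 n x y = (\<Sum>i<n. cmod (x i - y i))"

lemma dist1_coord: "i < n \<Longrightarrow> cmod (x i - y i) \<le> dist1 n x y"
  unfolding dist1_def by (rule member_le_sum) auto

lemma matrix_l1_bound:
  fixes M :: "nat \<Rightarrow> nat \<Rightarrow> complex"
  shows "(\<Sum>i<n. cmod (\<Sum>k<n. M i k * w k)) \<le> (1 + (\<Sum>i<n. \<Sum>k<n. cmod (M i k))) * (\<Sum>k<n. cmod (w k))"
proof -
  define S where "S = (\<Sum>k<n. cmod (w k))"
  have S0: "S \<ge> 0" unfolding S_def by (simp add: sum_nonneg)
  have "cmod (\<Sum>k<n. M i k * w k) \<le> (\<Sum>k<n. cmod (M i k) * S)" for i
  proof -
    have "cmod (\<Sum>k<n. M i k * w k) \<le> (\<Sum>k<n. cmod (M i k * w k))" by (rule norm_sum)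
    also have "\<dots> = (\<Sum>k<n. cmod (M i k) * cmod (w k))" by (simp add: norm_mult)
    also have "\<dots> \<le> (\<Sum>k<n. cmod (M i k) * S)"
      unfolding S_def by (intro sum_mono mult_left_mono member_le_sum) auto
    finally show ?thesis .
  qed
  hence "(\<Sum>i<n. cmod (\<Sum>k<n. M i k * w k)) \<le> (\<Sum>i<n. \<Sum>k<n. cmod (M i k) * S)"
    by (rule sum_mono)
  also have "\<dots> = (\<Sum>i<n. \<Sum>k<n. cmod (M i k)) * S" by (simp add: sum_distrib_right)
  also have "\<dots> \<le> (1 + (\<Sum>i<n. \<Sum>k<n. cmod (M i k))) * S" using S0 by (simp add: algebra_simps)
  finally show ?thesis unfolding S_def .
qed


section \<open>A holomorphic solution of x = x0 - M Ln(1 - t^d exp x)\<close>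

locale log_fixed_point =
  fixes n :: nat and M :: "nat \<Rightarrow> nat \<Rightarrow> complex" and x0 :: "nat \<Rightarrow> complex" and d :: "nat \<Rightarrow> nat"
  assumes d_pos: "\<And>k. k < n \<Longrightarrow> d k \<ge> 1"
begin

definition G :: "nat \<Rightarrow> complex \<Rightarrow> complex \<Rightarrow> complex" where
  "G k t y = Ln (1 - t ^ d k * exp y)"

definition T :: "complex \<Rightarrow> (nat \<Rightarrow> complex) \<Rightarrow> nat \<Rightarrow> complex" where
  "T t x = (\<lambda>i. x0 i - (\<Sum>k<n. M i k * G k t (x k)))"

text \<open>Constants: K bounds M, E bounds exp on the unit l1-ball around x0, and rho is a radius
  for t making T t a contraction of that ball into itself.\<close>

definition K :: real where "K = 1 + (\<Sum>i<n. \<Sum>k<n. cmod (M i k))"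
definition E :: real where "E = exp ((\<Sum>i<n. cmod (x0 i)) + 1)"
definition \<rho> :: real where "\<rho> = 1 / (8 * K * E * (real n + 1))"

lemma K_ge1: "K \<ge> 1" unfolding K_def by (simp add: sum_nonneg)
lemma E_ge1: "E \<ge> 1" unfolding E_def by (simp add: sum_nonneg)
lemma rho_pos: "\<rho> > 0" unfolding \<rho>_def using K_ge1 E_ge1 by simp

lemma rho_facts: "\<rho> * E \<le> 1/8" "2 * K * \<rho> * E * n \<le> 1/4" "2 * K * \<rho> * E \<le> 1/4" "\<rho> \<le> 1"
proof -
  note r = radius_arith[OF K_ge1 E_ge1 of_nat_0_le_iff[of n]]
  show "\<rho> * E \<le> 1/8" "2 * K * \<rho> * E * n \<le> 1/4" "2 * K * \<rho> * E \<le> 1/4"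
    unfolding \<rho>_def by (fact r(1), fact r(2), fact r(3))
  have "\<rho> * 1 \<le> \<rho> * E" using rho_pos E_ge1 by (intro mult_left_mono) auto
  thus "\<rho> \<le> 1" using \<open>\<rho> * E \<le> 1/8\<close> by linarith
qed

lemma exp_coord_le_E: "k < n \<Longrightarrow> exp (cmod (x0 k) + 1) \<le> E"
  using member_le_sum[of k "{..<n}" "\<lambda>i. cmod (x0 i)"] unfolding E_def by simp

lemma exp_le_E: "k < n \<Longrightarrow> dist (x0 k) y \<le> 1 \<Longrightarrow> cmod (exp y) \<le> E"
  using exp_bound_near[of "x0 k" y] exp_coord_le_E[of k] by linarith

lemma power_le_rho: "k < n \<Longrightarrow> cmod t \<le> \<rho> \<Longrightarrow> cmod (t ^ d k) \<le> \<rho>"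
  using power_decreasing[of 1 "d k" "cmod t"] d_pos rho_facts(4) by (simp add: norm_power)

lemma W_bound:
  assumes "k < n" "cmod t \<le> \<rho>" "dist (x0 k) y \<le> 1"
  shows "cmod (t ^ d k * exp y) \<le> \<rho> * E" "cmod (t ^ d k * exp y) \<le> 1/2"
proof -
  show "cmod (t ^ d k * exp y) \<le> \<rho> * E"
    unfolding norm_mult using power_le_rho exp_le_E assms rho_pos by (intro mult_mono) auto
  thus "cmod (t ^ d k * exp y) \<le> 1/2" using rho_facts(1) by linarith
qed

lemma G_bound:
  assumes "k < n" "cmod t \<le> \<rho>" "dist (x0 k) y \<le> 1"
  shows "cmod (G k t y) \<le> 2 * \<rho> * E"
  using Ln_one_minus_bound[OF W_bound(2)[OF assms]] W_bound(1)[OF assms] unfolding G_def by linarith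

lemma G_lipschitz:
  assumes k: "k < n" and t: "cmod t \<le> \<rho>" and y: "dist (x0 k) y \<le> 1" and y': "dist (x0 k) y' \<le> 1"
  shows "cmod (G k t y - G k t y') \<le> 2 * \<rho> * E * cmod (y - y')"
proof -
  have exp_lip: "cmod (exp y - exp y') \<le> E * cmod (y - y')"
    using exp_lipschitz_near[OF y y'] mult_right_mono[OF exp_coord_le_E[OF k] norm_ge_zero[of "y - y'"]]
    by linarith
  have "cmod (G k t y - G k t y') \<le> 2 * cmod (t ^ d k * (exp y - exp y'))"
    using Ln_one_minus_lipschitz[OF W_bound(2)[OF k t y] W_bound(2)[OF k t y']]
    unfolding G_def by (simp add: right_diff_distrib)
  also have "\<dots> = 2 * (cmod (t ^ d k) * cmod (exp y - exp y'))" by (simp add: norm_mult)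
  also have "\<dots> \<le> 2 * (\<rho> * (E * cmod (y - y')))"
    using exp_lip power_le_rho[OF k t] rho_pos by (intro mult_left_mono mult_mono) auto
  finally show ?thesis by (simp add: mult.assoc)
qed

lemma near_x0: "dist1 n x x0 \<le> 1 \<Longrightarrow> k < n \<Longrightarrow> dist (x0 k) (x k) \<le> 1"
  using dist1_coord[of k n x x0] by (simp add: dist_norm norm_minus_commute)

lemma T_into:
  assumes t: "cmod t \<le> \<rho>" and x: "dist1 n x x0 \<le> 1"
  shows "dist1 n (T t x) x0 \<le> 1"
proof -
  have "dist1 n (T t x) x0 = (\<Sum>i<n. cmod (\<Sum>k<n. M i k * G k t (x k)))"
    unfolding dist1_def T_def by (simp add: norm_minus_commute)
  also have "\<dots> \<le> K * (\<Sum>k<n. cmod (G k t (x k)))" unfolding K_def by (rule matrix_l1_bound)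
  also have "\<dots> \<le> K * (\<Sum>k<n. 2 * \<rho> * E)"
    using K_ge1 G_bound[OF _ t near_x0[OF x]] by (intro mult_left_mono sum_mono) auto
  also have "\<dots> = 2 * K * \<rho> * E * n" by simp
  also have "\<dots> \<le> 1" using rho_facts(2) by linarith
  finally show ?thesis .
qed

lemma T_contraction:
  assumes t: "cmod t \<le> \<rho>" and x: "dist1 n x x0 \<le> 1" and y: "dist1 n y x0 \<le> 1"
  shows "dist1 n (T t x) (T t y) \<le> 1/4 * dist1 n x y"
proof -
  have "dist1 n (T t x) (T t y) = (\<Sum>i<n. cmod (\<Sum>k<n. M i k * (G k t (y k) - G k t (x k))))"
    unfolding dist1_def T_def by (simp add: sum_subtractf right_diff_distrib)
  also have "\<dots> \<le> K * (\<Sum>k<n. cmod (G k t (y k) - G k t (x k)))" unfolding K_def by (rule matrix_l1_bound)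
  also have "\<dots> \<le> K * (\<Sum>k<n. 2 * \<rho> * E * cmod (x k - y k))"
    using K_ge1 G_lipschitz[OF _ t near_x0[OF y] near_x0[OF x]]
    by (intro mult_left_mono sum_mono) (auto simp: norm_minus_commute)
  also have "\<dots> = 2 * K * \<rho> * E * dist1 n x y" by (simp add: dist1_def sum_distrib_left algebra_simps)
  also have "\<dots> \<le> 1/4 * dist1 n x y"
    using rho_facts(3) by (intro mult_right_mono) (auto simp: dist1_def sum_nonneg)
  finally show ?thesis .
qed

definition iter :: "nat \<Rightarrow> complex \<Rightarrow> nat \<Rightarrow> complex" where
  "iter k t = (T t ^^ k) x0"

lemma iter_Suc: "iter (Suc k) t = T t (iter k t)"
  unfolding iter_def by simp

lemma iter_near_x0:
  assumes t: "cmod t \<le> \<rho>"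
  shows "dist1 n (iter k t) x0 \<le> 1"
proof (induction k)
  case 0 show ?case by (simp add: iter_def dist1_def)
next
  case (Suc k) show ?case unfolding iter_Suc by (rule T_into[OF t Suc.IH])
qed

lemma iter_step: "cmod t \<le> \<rho> \<Longrightarrow> dist1 n (iter (Suc k) t) (iter k t) \<le> (1/4) ^ k"
proof (induction k)
  case 0 thus ?case using T_into[OF 0, of x0] by (simp add: iter_def dist1_def)
next
  case (Suc k)
  have "dist1 n (iter (Suc (Suc k)) t) (iter (Suc k) t) \<le> 1/4 * dist1 n (iter (Suc k) t) (iter k t)"
    using T_contraction[OF Suc.prems iter_near_x0[OF Suc.prems, of "Suc k"] iter_near_x0[OF Suc.prems, of k]]
    by (simp only: iter_Suc)
  thus ?case using Suc by simp
qed

text \<open>Each iterate is holomorphic on the closed disc: 1 - t^d exp(y) stays in |w - 1| <= 1/2,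
  away from the branch cut of Ln.\<close>

lemma iter_holomorphic: "\<forall>i<n. (\<lambda>t. iter k t i) holomorphic_on cball 0 \<rho>"
proof (induction k)
  case 0 show ?case by (simp add: iter_def)
next
  case (Suc k)
  have "(\<lambda>t. G j t (iter k t j)) holomorphic_on cball 0 \<rho>" if j: "j < n" for j
    unfolding G_def
  proof (rule holomorphic_on_Ln')
    fix t :: complex assume "t \<in> cball 0 \<rho>"
    thus "1 - t ^ d j * exp (iter k t j) \<notin> \<real>\<^sub>\<le>\<^sub>0"
      by (intro one_minus_not_nonpos W_bound(2)[OF j] near_x0[OF iter_near_x0 j]) auto
  qed (use Suc j in \<open>auto intro!: holomorphic_intros\<close>)
  thus ?case unfolding iter_Suc T_def by (auto intro!: holomorphic_intros)
qed

text \<open>The iterates converge uniformly on the closed disc (Weierstrass M-test on the telescoping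
  series), so their limit X is holomorphic on the open disc.\<close>

definition X :: "complex \<Rightarrow> nat \<Rightarrow> complex" where
  "X t i = x0 i + (\<Sum>j. iter (Suc j) t i - iter j t i)"

lemma iter_uniform_limit:
  assumes i: "i < n"
  shows "uniform_limit (cball 0 \<rho>) (\<lambda>k t. iter k t i) (\<lambda>t. X t i) sequentially"
proof -
  have "uniform_limit (cball 0 \<rho>) (\<lambda>k t. \<Sum>j<k. iter (Suc j) t i - iter j t i)
      (\<lambda>t. \<Sum>j. iter (Suc j) t i - iter j t i) sequentially"
  proof (rule Weierstrass_m_test[where M = "\<lambda>j. (1/4) ^ j"])
    fix j and t :: complex assume "t \<in> cball 0 \<rho>"
    thus "norm (iter (Suc j) t i - iter j t i) \<le> (1/4) ^ j"
      using order_trans[OF dist1_coord[OF i] iter_step[of t j]] by simp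
  qed simp
  hence "uniform_limit (cball 0 \<rho>) (\<lambda>k t. x0 i + (\<Sum>j<k. iter (Suc j) t i - iter j t i))
      (\<lambda>t. X t i) sequentially"
    unfolding X_def by (intro uniform_limit_intros)
  moreover have "x0 i + (\<Sum>j<k. iter (Suc j) t i - iter j t i) = iter k t i" for k t
    by (simp add: sum_lessThan_telescope[of "\<lambda>j. iter j t i"]) (simp add: iter_def)
  ultimately show ?thesis by simp
qed

lemma X_holomorphic:
  assumes i: "i < n"
  shows "(\<lambda>t. X t i) holomorphic_on ball 0 \<rho>"
proof (rule holomorphic_uniform_limit[OF _ iter_uniform_limit[OF i] trivial_limit_sequentially])
  have "continuous_on (cball 0 \<rho>) (\<lambda>t. iter k t i) \<and> (\<lambda>t. iter k t i) holomorphic_on ball 0 \<rho>" for k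
    using iter_holomorphic[of k] i
    by (auto intro: holomorphic_on_imp_continuous_on holomorphic_on_subset[OF _ ball_subset_cball])
  thus "\<forall>\<^sub>F k in sequentially. continuous_on (cball 0 \<rho>) (\<lambda>t. iter k t i) \<and>
      (\<lambda>t. iter k t i) holomorphic_on ball 0 \<rho>"
    by (intro always_eventually) blast
qed

lemma iter_tendsto: "cmod t \<le> \<rho> \<Longrightarrow> i < n \<Longrightarrow> (\<lambda>k. iter k t i) \<longlonglongrightarrow> X t i"
  using tendsto_uniform_limitI[OF iter_uniform_limit] by simp

lemma X_near_x0:
  assumes t: "cmod t \<le> \<rho>" and k: "k < n"
  shows "dist (x0 k) (X t k) \<le> 1"
  using LIMSEQ_le_const2[OF tendsto_dist[OF tendsto_const iter_tendsto[OF t k]]]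
    near_x0[OF iter_near_x0[OF t] k] by blast

text \<open>By continuity of T t, the limit is a fixed point.\<close>

lemma X_fixed_point:
  assumes t: "cmod t \<le> \<rho>" and i: "i < n"
  shows "X t i = x0 i - (\<Sum>k<n. M i k * Ln (1 - t ^ d k * exp (X t k)))"
proof (rule LIMSEQ_unique)
  show "(\<lambda>k. iter (Suc k) t i) \<longlonglongrightarrow> X t i" using LIMSEQ_Suc[OF iter_tendsto[OF t i]] .
  have Ln_lim: "(\<lambda>k. Ln (1 - t ^ d j * exp (iter k t j))) \<longlonglongrightarrow> Ln (1 - t ^ d j * exp (X t j))"
    if "j < n" for j
    using one_minus_not_nonpos[OF W_bound(2)[OF that t X_near_x0[OF t that]]]
    by (intro tendsto_Ln tendsto_diff tendsto_mult tendsto_exp tendsto_const iter_tendsto[OF t that])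
  have "(\<lambda>k. x0 i - (\<Sum>j<n. M i j * Ln (1 - t ^ d j * exp (iter k t j))))
      \<longlonglongrightarrow> x0 i - (\<Sum>j<n. M i j * Ln (1 - t ^ d j * exp (X t j)))"
    by (auto intro!: tendsto_diff tendsto_sum tendsto_mult_left Ln_lim)
  thus "(\<lambda>k. iter (Suc k) t i) \<longlonglongrightarrow> x0 i - (\<Sum>k<n. M i k * Ln (1 - t ^ d k * exp (X t k)))"
    unfolding iter_Suc T_def G_def .
qed

end

lemma holomorphic_log_fixed_point:
  fixes M :: "nat \<Rightarrow> nat \<Rightarrow> complex" and x0 :: "nat \<Rightarrow> complex" and d :: "nat \<Rightarrow> nat"
  assumes "\<And>k. k < n \<Longrightarrow> d k \<ge> 1"
  obtains \<rho> :: real and X :: "complex \<Rightarrow> nat \<Rightarrow> complex" where "\<rho> > 0"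
    and "\<And>i. i < n \<Longrightarrow> (\<lambda>s. X s i) holomorphic_on ball 0 \<rho>"
    and "\<And>s k. s \<in> ball 0 \<rho> \<Longrightarrow> k < n \<Longrightarrow> cmod (s ^ d k * exp (X s k)) \<le> 1/2"
    and "\<And>s i. s \<in> ball 0 \<rho> \<Longrightarrow> i < n \<Longrightarrow>
           X s i = x0 i - (\<Sum>k<n. M i k * Ln (1 - s ^ d k * exp (X s k)))"
proof -
  interpret log_fixed_point n M x0 d by unfold_locales (rule assms)
  show thesis
  proof (rule that[OF rho_pos X_holomorphic])
    fix s :: complex and k assume "s \<in> ball 0 \<rho>" "k < n"
    thus "cmod (s ^ d k * exp (X s k)) \<le> 1/2" using W_bound(2)[OF _ _ X_near_x0] by simp
  next
    fix s :: complex and i assume s: "s \<in> ball 0 \<rho>" and i: "i < n"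
    show "X s i = x0 i - (\<Sum>k<n. M i k * Ln (1 - s ^ d k * exp (X s k)))"
      by (rule X_fixed_point) (use s i in auto)
  qed
qed

lemma right_inverse_fixed_point:
  fixes A B :: "nat \<Rightarrow> nat \<Rightarrow> int" and R :: "nat \<Rightarrow> nat \<Rightarrow> complex" and x g w :: "nat \<Rightarrow> complex"
  assumes AR: "\<And>j j'. j < r \<Longrightarrow> j' < r \<Longrightarrow> (\<Sum>i<n. of_int (A j' i) * R i j) = (if j' = j then 1 else 0)"
    and j: "j < r"
    and fixed: "\<And>i. i < n \<Longrightarrow>
      x i = (\<Sum>j<r. R i j * w j) - (\<Sum>k<n. (\<Sum>j<r. R i j * of_int (B j k)) * g k)"
  shows "(\<Sum>i<n. of_int (A j i) * x i) + (\<Sum>i<n. of_int (B j i) * g i) = w j"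
proof -
  define y where "y j = w j - (\<Sum>k<n. of_int (B j k) * g k)" for j
  have "x i = (\<Sum>j<r. R i j * y j)" if i: "i < n" for i
  proof -
    have "(\<Sum>k<n. (\<Sum>j<r. R i j * of_int (B j k)) * g k) = (\<Sum>k<n. \<Sum>j<r. R i j * (of_int (B j k) * g k))"
      by (simp add: sum_distrib_right mult.assoc)
    also have "\<dots> = (\<Sum>j<r. R i j * (\<Sum>k<n. of_int (B j k) * g k))"
      by (subst sum.swap) (simp add: sum_distrib_left)
    finally show ?thesis
      unfolding fixed[OF i] y_def by (simp add: right_diff_distrib sum_subtractf)
  qed
  hence "(\<Sum>i<n. of_int (A j i) * x i) = y j"
    using right_inverse_apply[OF AR j, of y] by simp
  thus ?thesis by (simp add: y_def)
qed

text \<open>Hence, with a right inverse R of A, the holomorphic fixed point for M = R B and x0 = R w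
  solves the system A x + B Ln(1 - s^d exp x) = w near s = 0.\<close>

lemma gluing_curve:
  fixes A B :: "nat \<Rightarrow> nat \<Rightarrow> int" and R :: "nat \<Rightarrow> nat \<Rightarrow> complex"
    and w :: "nat \<Rightarrow> complex" and d :: "nat \<Rightarrow> nat"
  assumes AR: "\<And>j j'. j < r \<Longrightarrow> j' < r \<Longrightarrow> (\<Sum>i<n. of_int (A j' i) * R i j) = (if j' = j then 1 else 0)"
    and d: "\<And>k. k < n \<Longrightarrow> d k \<ge> 1"
  obtains \<rho> :: real and X :: "complex \<Rightarrow> nat \<Rightarrow> complex" where "\<rho> > 0"
    and "\<And>i. i < n \<Longrightarrow> (\<lambda>s. X s i) holomorphic_on ball 0 \<rho>"
    and "\<And>s k. s \<in> ball 0 \<rho> \<Longrightarrow> k < n \<Longrightarrow> cmod (s ^ d k * exp (X s k)) \<le> 1/2"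
    and "\<And>s j. s \<in> ball 0 \<rho> \<Longrightarrow> j < r \<Longrightarrow>
           (\<Sum>i<n. of_int (A j i) * X s i) + (\<Sum>i<n. of_int (B j i) * Ln (1 - s ^ d i * exp (X s i))) = w j"
proof (rule holomorphic_log_fixed_point[where M = "\<lambda>i k. \<Sum>j<r. R i j * of_int (B j k)"
      and ?x0.0 = "\<lambda>i. \<Sum>j<r. R i j * w j", OF d])
  fix \<rho> :: real and X :: "complex \<Rightarrow> nat \<Rightarrow> complex"
  assume \<rho>: "\<rho> > 0" and hol: "\<And>i. i < n \<Longrightarrow> (\<lambda>s. X s i) holomorphic_on ball 0 \<rho>"
    and small: "\<And>s k. s \<in> ball 0 \<rho> \<Longrightarrow> k < n \<Longrightarrow> cmod (s ^ d k * exp (X s k)) \<le> 1/2"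
    and fixed: "\<And>s i. s \<in> ball 0 \<rho> \<Longrightarrow> i < n \<Longrightarrow> X s i = (\<Sum>j<r. R i j * w j)
      - (\<Sum>k<n. (\<Sum>j<r. R i j * of_int (B j k)) * Ln (1 - s ^ d k * exp (X s k)))"
  show thesis
  proof (rule that[OF \<rho> hol small])
    fix s :: complex and j assume s: "s \<in> ball 0 \<rho>" and j: "j < r"
    show "(\<Sum>i<n. of_int (A j i) * X s i) + (\<Sum>i<n. of_int (B j i) * Ln (1 - s ^ d i * exp (X s i))) = w j"
      by (rule right_inverse_fixed_point[OF AR j]) (blast, blast, erule fixed[OF s])
  qed
qed

text \<open>For a totally positive d with A d = 0 and a right inverse of A, rescaling the curve of
  gluing_curve to the unit disc gives an arc t^(d_i) u_i(t) on V with u_i(0) <> 0.\<close>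

lemma holomorphic_arc_on_V:
  fixes A B :: "nat \<Rightarrow> nat \<Rightarrow> int" and R :: "nat \<Rightarrow> nat \<Rightarrow> complex" and c d :: "nat \<Rightarrow> int"
  assumes AR: "\<And>j j'. j < r \<Longrightarrow> j' < r \<Longrightarrow> (\<Sum>i<n. of_int (A j' i) * R i j) = (if j' = j then 1 else 0)"
    and d: "\<forall>i<n. d i > 0" and Ad: "\<forall>j<r. (\<Sum>i<n. A j i * d i) = 0"
  obtains u :: "nat \<Rightarrow> complex \<Rightarrow> complex"
  where "\<And>i. i < n \<Longrightarrow> u i holomorphic_on ball 0 1" and "\<And>i. i < n \<Longrightarrow> u i 0 \<noteq> 0"
    and "\<And>t. t \<in> ball 0 1 \<Longrightarrow> t \<noteq> 0 \<Longrightarrow>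
           (\<lambda>i. if i < n then t ^ nat (d i) * u i t else 0) \<in> Vvar n (lattice_of n r A B c)"
proof -
  define dn where "dn i = nat (d i)" for i
  have dn: "dn k \<ge> 1" "int (dn k) = d k" if "k < n" for k
    using d that by (auto simp: dn_def)
  have Ad_dn: "(\<Sum>i<n. A j i * int (dn i)) = 0" if "j < r" for j
    using Ad that dn(2) by (metis (no_types, lifting) lessThan_iff sum.cong)
  obtain \<rho> :: real and X :: "complex \<Rightarrow> nat \<Rightarrow> complex"
    where \<rho>: "\<rho> > 0" and hol: "\<And>i. i < n \<Longrightarrow> (\<lambda>s. X s i) holomorphic_on ball 0 \<rho>"
    and small: "\<And>s k. s \<in> ball 0 \<rho> \<Longrightarrow> k < n \<Longrightarrow> cmod (s ^ dn k * exp (X s k)) \<le> 1/2"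
    and eq: "\<And>s j. s \<in> ball 0 \<rho> \<Longrightarrow> j < r \<Longrightarrow> (\<Sum>i<n. of_int (A j i) * X s i)
           + (\<Sum>i<n. of_int (B j i) * Ln (1 - s ^ dn i * exp (X s i))) = of_real pi * \<i> * of_int (c j)"
    using gluing_curve[where B = B and w = "\<lambda>j. of_real pi * \<i> * of_int (c j)"
      and R = R and d = dn, OF AR dn(1)] by blast
  define u where "u i t = of_real \<rho> ^ dn i * exp (X (of_real \<rho> * t) i)" for i t
  have scale: "of_real \<rho> * t \<in> ball 0 \<rho>" if "t \<in> ball 0 1" for t :: complex
    using that \<rho> by (simp add: norm_mult)
  show thesis
  proof (rule that)
    fix i assume "i < n"
    have "((\<lambda>s. X s i) \<circ> (\<lambda>t. of_real \<rho> * t)) holomorphic_on ball 0 1"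
      using scale by (intro holomorphic_on_compose_gen[OF _ hol[OF \<open>i < n\<close>]] holomorphic_intros) auto
    thus "u i holomorphic_on ball 0 1" unfolding u_def o_def by (intro holomorphic_intros)
    show "u i 0 \<noteq> 0" using \<rho> by (simp add: u_def)
  next
    fix t :: complex assume t: "t \<in> ball 0 1" "t \<noteq> 0"
    define s where "s = of_real \<rho> * t"
    have s: "s \<in> ball 0 \<rho>" "s \<noteq> 0" using scale[OF t(1)] \<rho> t(2) by (auto simp: s_def)
    have z: "t ^ nat (d i) * u i t = s ^ dn i * exp (X s i)" for i
      by (simp add: u_def dn_def s_def power_mult_distrib)
    have z1: "s ^ dn i * exp (X s i) \<noteq> 1" if "i < n" for i using small[OF s(1) that] by auto
    show "(\<lambda>i. if i < n then t ^ nat (d i) * u i t else 0) \<in> Vvar n (lattice_of n r A B c)"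
      by (rule point_in_Vvar[where s = s and x = "X s" and dn = dn])
        (use s z z1 Ad_dn eq[OF s(1)] in auto)
  qed
qed


section \<open>Genuineness from a holomorphic arc\<close>

lemma Vvar_subset_Vclosure: "Vvar n \<Lambda> \<subseteq> Vclosure n \<Lambda>"
proof
  fix z assume z: "z \<in> Vvar n \<Lambda>"
  hence "z \<in> Cstarbullet_pts n" unfolding Vvar_def by auto
  thus "z \<in> Vclosure n \<Lambda>"
    unfolding Vclosure_def Cstarbullet_pts_def using z by fastforce
qed

lemma origin_not_in_Vvar: "n \<ge> 1 \<Longrightarrow> (\<lambda>i. 0) \<notin> Vvar n \<Lambda>"
  unfolding Vvar_def Cstarbullet_pts_def by (auto intro!: exI[of _ 0])

lemma origin_in_Vclosure:
  fixes f :: "nat \<Rightarrow> complex \<Rightarrow> complex"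
  assumes lim: "\<And>i. i < n \<Longrightarrow> (f i \<longlongrightarrow> 0) (at 0)"
    and arc: "\<And>t. t \<in> ball 0 1 \<Longrightarrow> t \<noteq> 0 \<Longrightarrow> (\<lambda>i. if i < n then f i t else 0) \<in> Vvar n \<Lambda>"
  shows "(\<lambda>i. 0) \<in> Vclosure n \<Lambda>"
  unfolding Vclosure_def
proof (intro CollectI conjI allI impI)
  fix e :: real assume e: "e > 0"
  have "\<forall>\<^sub>F t in at 0. \<forall>i\<in>{..<n}. norm (f i t) < e"
    using lim e by (intro eventually_ball_finite) (auto simp: tendsto_iff)
  moreover have "\<forall>\<^sub>F t in at 0. t \<in> ball (0::complex) 1 - {0}"
    by (rule eventually_at_in_open) auto
  ultimately have "\<forall>\<^sub>F t in at 0. (\<forall>i\<in>{..<n}. norm (f i t) < e) \<and> t \<in> ball 0 1 - {0}"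
    by (rule eventually_conj)
  then obtain t where t: "\<forall>i<n. norm (f i t) < e" "t \<in> ball 0 1" "t \<noteq> 0"
    using eventually_happens'[OF at_neq_bot] by blast
  show "\<exists>z\<in>Vvar n \<Lambda>. \<forall>i<n. norm (z i - 0) < e"
    using t(1) by (intro bexI[OF _ arc[OF t(2,3)]]) simp
qed auto

text \<open>A totally positive d is genuine as soon as the arc t^(d_i) u_i(t), with u_i holomorphic and
  nonvanishing at 0, lies on V for t <> 0: the arc tends to the ideal point 0.\<close>

lemma genuine_of_arc:
  fixes u :: "nat \<Rightarrow> complex \<Rightarrow> complex" and d :: "nat \<Rightarrow> int"
  assumes n: "n \<ge> 1" and d: "\<forall>i<n. d i > 0"
    and hol: "\<And>i. i < n \<Longrightarrow> u i holomorphic_on ball 0 1" and u0: "\<And>i. i < n \<Longrightarrow> u i 0 \<noteq> 0"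
    and arc: "\<And>t. t \<in> ball 0 1 \<Longrightarrow> t \<noteq> 0 \<Longrightarrow> (\<lambda>i. if i < n then t ^ nat (d i) * u i t else 0) \<in> Vvar n \<Lambda>"
  shows "genuine n \<Lambda> d"
proof -
  define f where "f i t = t ^ nat (d i) * u i t" for i t
  have f_hol: "f i holomorphic_on ball 0 1" if "i < n" for i
    unfolding f_def using hol[OF that] by (intro holomorphic_intros)
  have f0: "f i 0 = 0" if "i < n" for i using d that by (simp add: f_def)
  have f_lim: "(f i \<longlongrightarrow> 0) (at 0)" if i: "i < n" for i
  proof -
    have "isCont (f i) 0"
      using holomorphic_on_imp_continuous_on[OF f_hol[OF i]]
        continuous_on_eq_continuous_at[of "ball 0 1" "f i"] by simp
    thus ?thesis using f0[OF i] by (simp add: isCont_def)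
  qed
  have arc_f: "(\<lambda>i. if i < n then f i t else 0) \<in> Vvar n \<Lambda>" if "t \<in> ball 0 1" "t \<noteq> 0" for t
    unfolding f_def by (rule arc[OF that])
  have closure: "(\<lambda>i. 0) \<in> Vclosure n \<Lambda>" by (rule origin_in_Vclosure[OF f_lim arc_f])
  have arc_closure: "(\<lambda>i. if i < n then f i t else 0) \<in> Vclosure n \<Lambda>" if "t \<in> ball 0 1" for t
  proof (cases "t = 0")
    case True
    hence "(\<lambda>i. if i < n then f i t else 0) = (\<lambda>i. 0)" using f0 by auto
    thus ?thesis using closure by simp
  qed (use arc_f[OF that] Vvar_subset_Vclosure in blast)
  show ?thesis
    unfolding genuine_def
  proof (intro exI conjI ballI allI impI)
    show "ideal_point n \<Lambda> (\<lambda>i. 0)"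
      unfolding ideal_point_def using closure origin_not_in_Vvar[OF n] by simp
    fix i assume i: "i < n"
    show "f i holomorphic_on ball 0 1" by (rule f_hol[OF i])
    show "f i 0 = 0" by (rule f0[OF i])
    show "u i holomorphic_on ball 0 1" by (rule hol[OF i])
    show "u i 0 \<noteq> 0" by (rule u0[OF i])
    show "d i = 0 \<Longrightarrow> u i 0 \<noteq> 1" using d i by auto
  next
    fix t :: complex assume "t \<in> ball 0 1"
    thus "(\<lambda>i. if i < n then f i t else 0) \<in> Vclosure n \<Lambda>" by (rule arc_closure)
  next
    fix t :: complex assume "t \<in> ball 0 1 - {0}"
    thus "(\<lambda>i. if i < n then f i t else 0) \<in> Vvar n \<Lambda>" using arc_f by blast
  next
    fix i t assume "i < n" "t \<in> ball (0::complex) 1"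
    show "f i t = t ^ nat (d i) * u i t" by (simp add: f_def)
  qed
qed


theorem mainTheorem6:
  fixes n r :: nat and A B :: "nat \<Rightarrow> nat \<Rightarrow> int" and c d :: "nat \<Rightarrow> int"
  assumes "r \<le> n - 1"
    and "rows_independent n r A B c"
    and "degeneration_vector n r A d"
    and "\<forall>i<n. d i > 0"
    and "int_mat_rank r n A = n - 1"
  shows "genuine n (lattice_of n r A B c) d"
proof -
  have n: "n \<ge> 1" and Ad: "\<forall>j<r. (\<Sum>i<n. A j i * d i) = 0"
    using assms(3) unfolding degeneration_vector_def by auto
  obtain R :: "nat \<Rightarrow> nat \<Rightarrow> complex"
    where AR: "\<And>j j'. j < r \<Longrightarrow> j' < r \<Longrightarrow> (\<Sum>i<n. of_int (A j' i) * R i j) = (if j' = j then 1 else 0)"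
    using full_row_rank_right_inverse[of r n A] assms(1,5) by auto
  show ?thesis
  proof (rule holomorphic_arc_on_V[OF AR assms(4) Ad, where B = B and c = c])
    fix u :: "nat \<Rightarrow> complex \<Rightarrow> complex"
    assume "\<And>i. i < n \<Longrightarrow> u i holomorphic_on ball 0 1" "\<And>i. i < n \<Longrightarrow> u i 0 \<noteq> 0"
      "\<And>t. t \<in> ball 0 1 \<Longrightarrow> t \<noteq> 0 \<Longrightarrow>
         (\<lambda>i. if i < n then t ^ nat (d i) * u i t else 0) \<in> Vvar n (lattice_of n r A B c)"
    thus ?thesis by (rule genuine_of_arc[OF n assms(4)])
  qed
qed

end
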